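(* Let $q$ be a power of $2$. Then in ${\rm PG}(4,q)$ there exist a set $\mathcal L$ of $q^3+1$ pairwise skew lines and a set $\mathcal P$ of $q^3+1$ planes any two of which intersect in exactly one point, such that no line of $\mathcal L$ is contained in a plane of $\mathcal P$. *)

theory Defs
  imports "HOL-Analysis.Analysis"
begin

text \<open>The projective space PG(4,F) over a field F is modelled as the lattice of
  linear subspaces of the 5-dimensional vector space F^5 (type \<open>'a^5\<close>).
  A projective subspace of projective dimension k is a linear subspace of
  vector-space dimension k+1: points (k=0), lines (k=1), planes (k=2).\<close>

definition pg_subspace :: "nat \<Rightarrow> ('a::field ^ 5) set \<Rightarrow> bool" where
  "pg_subspace k S \<longleftrightarrow> vec.subspace S \<and> vec.dim S = k + 1"

abbreviation pg_line :: "('a::field ^ 5) set \<Rightarrow> bool" where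
  "pg_line S \<equiv> pg_subspace 1 S"

abbreviation pg_plane :: "('a::field ^ 5) set \<Rightarrow> bool" where
  "pg_plane S \<equiv> pg_subspace 2 S"

definition pg_skew :: "('a::field ^ 5) set \<Rightarrow> ('a::field ^ 5) set \<Rightarrow> bool" where
  "pg_skew S T \<longleftrightarrow> S \<inter> T = {0}"

definition pg_meet_in_one_point :: "('a::field ^ 5) set \<Rightarrow> ('a::field ^ 5) set \<Rightarrow> bool" where
  "pg_meet_in_one_point S T \<longleftrightarrow> vec.dim (S \<inter> T) = 1"

end

theory Submission
  imports Defs "HOL-Library.Cardinality"
begin

text \<open>Let \<open>\<phi>\<close> be the companion matrix of a cubic without roots in the finite field \<open>F\<close>
  (the matrix of multiplication by a root of the cubic, transposed); it has no eigenvector.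
  Write points of \<open>PG(4, F)\<close> as \<open>(a, y, b)\<close> with \<open>y \<in> F\<^sup>3\<close>. The \<open>q\<^sup>3 - q\<close> lines
  \<open>L u = \<langle>(1, u, 0), (0, \<phi> u, 1)\<rangle>\<close> with \<open>u \<notin> F e\<^sub>1\<close> and the \<open>q + 1\<close> lines
  \<open>M (z\<^sub>1 : z\<^sub>2) = \<langle>(z\<^sub>1, 0, z\<^sub>2), (0, z\<^sub>1 e\<^sub>1 + z\<^sub>2 \<phi> e\<^sub>1, 0)\<rangle>\<close> are pairwise skew: a common point
  of two of them yields \<open>s d + t \<phi> d = 0\<close> with \<open>d \<noteq> 0\<close>, forcing \<open>s = t = 0\<close>.
  The \<open>q\<^sup>3\<close> planes \<open>P v = {(v\<bullet>\<phi> y - v\<bullet>y, y, v\<bullet>\<phi> y)}\<close> and \<open>P\<^sub>\<infinity> = {(a, t e\<^sub>2, b)}\<close> pairwise meet in a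
  point: \<open>P v\<close> and \<open>P v'\<close> share exactly the points whose \<open>y\<close> is orthogonal to \<open>d = v - v'\<close> and
  to \<open>\<phi>\<^sup>T d\<close>, two independent vectors, so \<open>y\<close> is a multiple of their cross product.
  Finally \<open>L u \<subseteq> P v\<close> would force \<open>v\<bullet>\<phi> u\<close> to be both \<open>0\<close> and \<open>1\<close>.\<close>

lemma exhaust_5:
  fixes i :: 5
  shows "i = 1 \<or> i = 2 \<or> i = 3 \<or> i = 4 \<or> i = 5"
proof (induct i)
  case (of_int z)
  then have "z = 0 \<or> z = 1 \<or> z = 2 \<or> z = 3 \<or> z = 4" by fastforce
  then show ?case by auto
qed

lemma forall_5: "(\<forall>i::5. P i) \<longleftrightarrow> P 1 \<and> P 2 \<and> P 3 \<and> P 4 \<and> P 5"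
  by (metis exhaust_5)

definition vec5 :: "'a::zero \<Rightarrow> 'a^3 \<Rightarrow> 'a \<Rightarrow> 'a^5" where
  "vec5 a y b = (\<chi> i. if i = 1 then a else if i = 2 then y$1 else if i = 3 then y$2
                     else if i = 4 then y$3 else b)"

lemma vec5_nth [simp]:
  "vec5 a y b $ 1 = a" "vec5 a y b $ 2 = y$1" "vec5 a y b $ 3 = y$2"
  "vec5 a y b $ 4 = y$3" "vec5 a y b $ 5 = b"
  by (simp_all add: vec5_def)

lemma vec5_eq_iff: "vec5 a y b = vec5 a' y' b' \<longleftrightarrow> a = a' \<and> y = y' \<and> b = b'"
  by (auto simp: vec_eq_iff forall_5 forall_3)

lemma vec5_zero [simp]: "vec5 0 0 0 = 0"
  by (simp add: vec_eq_iff forall_5)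

lemma vec5_eq_0_iff: "vec5 a y b = 0 \<longleftrightarrow> a = 0 \<and> y = 0 \<and> b = 0"
  using vec5_eq_iff[of a y b 0 0 0] by simp

lemma vec5_cases:
  obtains a y b where "x = vec5 a y b"
proof
  show "x = vec5 (x$1) (vector [x$2, x$3, x$4]) (x$5)"
    by (simp add: vec_eq_iff forall_5)
qed

lemma vec5_add: "vec5 a y b + vec5 a' y' b' = vec5 (a + a') (y + y') (b + b')"
  by (simp add: vec_eq_iff forall_5)

lemma vec5_scale: "c *s vec5 a y b = vec5 (c * a) (c *s y) (c * b)"
  by (simp add: vec_eq_iff forall_5)

lemma vec_linearI:
  fixes f :: "'a::field^'m \<Rightarrow> 'a^'n"
  assumes "\<And>x y. f (x + y) = f x + f y" and "\<And>c x. f (c *s x) = c *s f x"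
  shows "Vector_Spaces.linear (*s) (*s) f"
  using assms by (simp add: Vector_Spaces.linear_iff vec.vector_space_axioms)

lemma pg_subspace_range_linear:
  fixes f :: "'a::field^'m \<Rightarrow> 'a^5"
  assumes lin: "Vector_Spaces.linear (*s) (*s) f"
    and ker: "\<And>x. f x = 0 \<Longrightarrow> x = 0"
    and "CARD('m) = k + 1"
  shows "pg_subspace k (range f)"
proof -
  have "inj f" using ker by (simp add: vec.linear_inj_iff_eq_0[OF lin])
  then have "vec.dim (range f) = vec.dim (UNIV :: ('a^'m) set)"
    by (intro vec.dim_image_eq[OF lin]) (auto intro: inj_on_subset)
  then show ?thesis
    using assms(3) vec.linear_subspace_image[OF lin vec.subspace_UNIV]
    by (simp add: pg_subspace_def card_cart_basis)
qed

lemma pg_skewI: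
  assumes "pg_subspace j S" and "pg_subspace k T" and "\<And>x. x \<in> S \<Longrightarrow> x \<in> T \<Longrightarrow> x = 0"
  shows "pg_skew S T"
  using assms vec.subspace_0 by (auto simp: pg_skew_def pg_subspace_def)

lemma pg_meet_in_one_pointI:
  assumes "S \<inter> T = vec.span {x}" and "x \<noteq> 0"
  shows "pg_meet_in_one_point S T"
  using assms by (simp add: pg_meet_in_one_point_def)

lemma pg_skew_commute: "pg_skew S T \<longleftrightarrow> pg_skew T S"
  by (simp add: pg_skew_def Int_commute)

lemma pg_meet_in_one_point_commute: "pg_meet_in_one_point S T \<longleftrightarrow> pg_meet_in_one_point T S"
  by (simp add: pg_meet_in_one_point_def Int_commute)

lemma inj_on_pg_subspace_family:
  assumes "\<And>i. i \<in> I \<Longrightarrow> pg_subspace k (F i)"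
    and "\<And>i j. i \<in> I \<Longrightarrow> j \<in> I \<Longrightarrow> i \<noteq> j \<Longrightarrow> vec.dim (F i \<inter> F j) \<noteq> k + 1"
  shows "inj_on F I"
  using assms by (metis inj_onI Int_absorb pg_subspace_def)

lemma proportional_pairs_eq_0:
  fixes s s' :: "'a::field"
  assumes "s * z1 = s' * z1'" and "s * z2 = s' * z2'" and "z1 * z2' \<noteq> z1' * z2"
  shows "s = 0"
proof -
  have "s * (z1 * z2' - z1' * z2) = (s * z1) * z2' - (s * z2) * z1'"
    by (simp add: algebra_simps)
  also have "\<dots> = 0" using assms(1,2) by simp
  finally show ?thesis using assms(3) by simp
qed

definition proj_coords :: "'a::field option \<Rightarrow> 'a \<times> 'a" where
  "proj_coords k = (case k of None \<Rightarrow> (0, 1) | Some t \<Rightarrow> (1, t))"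

lemma proj_coords_nonzero: "proj_coords k \<noteq> (0, 0)"
  by (cases k) (simp_all add: proj_coords_def)

lemma proj_coords_det_nonzero:
  assumes "k \<noteq> k'" and "proj_coords k = (z1, z2)" and "proj_coords k' = (z1', z2')"
  shows "z1 * z2' \<noteq> z1' * z2"
  using assms by (cases k; cases k') (auto simp: proj_coords_def)

definition line_index :: "('a::field^3 + 'a option) set" where
  "line_index = Inl ` (- range (\<lambda>c. c *s axis 1 1)) \<union> range Inr"

lemma card_line_index:
  "card (line_index :: ('a::{finite,field}^3 + 'a option) set) = CARD('a)^3 + 1"
proof -
  let ?E = "range (\<lambda>c::'a. c *s (axis 1 1 :: 'a^3))"
  have "inj (\<lambda>c::'a. c *s (axis 1 1 :: 'a^3))"
    by (rule injI) (metis vector_smult_component axis_nth mult_1_right)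
  then have "card (- ?E) = CARD('a)^3 - CARD('a)"
    by (simp add: Compl_eq_Diff_UNIV card_Diff_subset card_image)
  moreover have "CARD('a) \<le> CARD('a)^3"
    by (simp add: self_le_power finite_UNIV_card_ge_0 Suc_leI)
  moreover have "card (line_index :: ('a^3 + 'a option) set) = card (- ?E) + CARD('a option)"
    unfolding line_index_def by (subst card_Un_disjoint) (auto simp: card_image)
  ultimately show ?thesis by (simp add: card_UNIV_option)
qed

definition dot :: "'a::field^3 \<Rightarrow> 'a^3 \<Rightarrow> 'a" where
  "dot x y = x$1 * y$1 + x$2 * y$2 + x$3 * y$3"

definition cross :: "'a::field^3 \<Rightarrow> 'a^3 \<Rightarrow> 'a^3" where
  "cross a b = (\<chi> i. if i = 1 then a$2 * b$3 - a$3 * b$2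
                     else if i = 2 then a$3 * b$1 - a$1 * b$3
                     else a$1 * b$2 - a$2 * b$1)"

lemma cross_nth [simp]:
  "cross a b $ 1 = a$2 * b$3 - a$3 * b$2"
  "cross a b $ 2 = a$3 * b$1 - a$1 * b$3"
  "cross a b $ 3 = a$1 * b$2 - a$2 * b$1"
  by (simp_all add: cross_def)

lemma dot_scale_right: "dot x (c *s y) = c * dot x y"
  by (simp add: dot_def algebra_simps)

lemma dot_diff_left: "dot (x - x') y = dot x y - dot x' y"
  by (simp add: dot_def algebra_simps)

lemma dot_cross_left: "dot a (cross a b) = 0" and dot_cross_right: "dot b (cross a b) = 0"
  by (simp_all add: dot_def algebra_simps)

lemma cross_eq_0_imp_multiple:
  fixes a b :: "'a::field^3"
  assumes "a \<noteq> 0" and "cross a b = 0"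
  shows "\<exists>t. b = t *s a"
proof -
  have c: "a$2 * b$3 = a$3 * b$2" "a$3 * b$1 = a$1 * b$3" "a$1 * b$2 = a$2 * b$1"
    using assms(2) by (auto simp: vec_eq_iff forall_3)
  obtain i where "a$i \<noteq> 0" using assms(1) by (auto simp: vec_eq_iff)
  then have "b = (b$i / a$i) *s a"
    using c exhaust_3[of i] by (auto simp: vec_eq_iff forall_3 field_simps)
  then show ?thesis ..
qed

lemma cross_cross_left: "cross (cross a b) y = dot a y *s b - dot b y *s a"
  by (simp add: vec_eq_iff forall_3 dot_def algebra_simps)

lemma orthogonal_imp_multiple_cross:
  fixes a b y :: "'a::field^3"
  assumes "cross a b \<noteq> 0" and "dot a y = 0" and "dot b y = 0"
  shows "\<exists>t. y = t *s cross a b"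
  using cross_eq_0_imp_multiple[OF assms(1)] assms(2,3) by (simp add: cross_cross_left)

text \<open>Were every monic cubic to have a root, \<open>(r, x, z) \<mapsto> (t - r)(t\<^sup>2 + x t + z)\<close> would
  be a surjective, hence injective, parametrisation of the monic cubics over the finite
  field; but \<open>t (t\<^sup>2 - 1) = (t - 1)(t\<^sup>2 + t)\<close>.\<close>

lemma finite_field_rootless_cubic:
  "\<exists>a0 a1 a2::'a::{finite,field}. \<forall>t. t^3 + a2 * t^2 + a1 * t + a0 \<noteq> 0"
proof (rule ccontr)
  assume all_roots: "\<not> ?thesis"
  define h :: "'a \<times> 'a \<times> 'a \<Rightarrow> 'a \<times> 'a \<times> 'a" where
    "h = (\<lambda>(r, x, z). (x - r, z - r * x, - (r * z)))"
  have "c \<in> range h" for c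
  proof -
    obtain a b e where c: "c = (a, b, e)" by (cases c) auto
    obtain r where r: "r^3 + a * r^2 + b * r + e = 0" using all_roots by blast
    have "e = - (r * (b + r * (a + r)))"
      using r by (simp add: algebra_simps power2_eq_square power3_eq_cube eq_neg_iff_add_eq_0)
    then have "h (r, a + r, b + r * (a + r)) = c"
      using c by (simp add: h_def algebra_simps)
    then show ?thesis by (metis rangeI)
  qed
  then have "surj h" by auto
  then have "inj h" by (simp add: finite_UNIV_surj_inj)
  moreover have "h (0, -1, 0) = h (1, 0, 0)" by (simp add: h_def)
  ultimately have "(0::'a, -1::'a, 0::'a) = (1, 0, 0)" by (rule injD)
  then show False by simp
qed

locale rootless_cubic =
  fixes a0 a1 a2 :: "'a::field"
  assumes no_root: "\<And>t. t^3 + a2 * t^2 + a1 * t + a0 \<noteq> 0"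
begin

definition \<phi> :: "'a^3 \<Rightarrow> 'a^3" where
  "\<phi> x = (\<chi> i. if i = 1 then x$2 else if i = 2 then x$3 else - (a0 * x$1 + a1 * x$2 + a2 * x$3))"

definition \<psi> :: "'a^3 \<Rightarrow> 'a^3" where
  "\<psi> x = (\<chi> i. if i = 1 then - (a0 * x$3) else if i = 2 then x$1 - a1 * x$3 else x$2 - a2 * x$3)"

lemma \<phi>_nth [simp]:
  "\<phi> x $ 1 = x$2" "\<phi> x $ 2 = x$3" "\<phi> x $ 3 = - (a0 * x$1 + a1 * x$2 + a2 * x$3)"
  by (simp_all add: \<phi>_def)

lemma \<psi>_nth [simp]:
  "\<psi> x $ 1 = - (a0 * x$3)" "\<psi> x $ 2 = x$1 - a1 * x$3" "\<psi> x $ 3 = x$2 - a2 * x$3"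
  by (simp_all add: \<psi>_def)

lemma \<phi>_add: "\<phi> (x + y) = \<phi> x + \<phi> y"
  by (simp add: vec_eq_iff forall_3 algebra_simps)

lemma \<phi>_scale: "\<phi> (c *s x) = c *s \<phi> x"
  by (simp add: vec_eq_iff forall_3 algebra_simps)

lemma \<phi>_diff: "\<phi> (x - y) = \<phi> x - \<phi> y"
  by (simp add: vec_eq_iff forall_3 algebra_simps)

lemma dot_\<phi>: "dot d (\<phi> y) = dot (\<psi> d) y"
  by (simp add: dot_def algebra_simps)

lemma a0_nonzero: "a0 \<noteq> 0"
  using no_root[of 0] by simp

lemma \<phi>_eigenvector_eq_0:
  assumes "\<phi> d = l *s d"
  shows "d = 0"
proof -
  have e: "d$2 = l * d$1" "d$3 = l * d$2" "- (a0 * d$1 + a1 * d$2 + a2 * d$3) = l * d$3"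
    using assms by (auto simp: vec_eq_iff forall_3)
  then have "d$1 * (l^3 + a2 * l^2 + a1 * l + a0) = 0"
    by (simp add: algebra_simps power2_eq_square power3_eq_cube) (metis add.commute add_eq_0_iff)
  then have "d$1 = 0" using no_root by simp
  then show ?thesis using e by (simp add: vec_eq_iff forall_3)
qed

lemma \<psi>_eigenvector_eq_0:
  assumes "\<psi> d = l *s d"
  shows "d = 0"
proof -
  have e: "- (a0 * d$3) = l * d$1" "d$1 - a1 * d$3 = l * d$2" "d$2 - a2 * d$3 = l * d$3"
    using assms by (auto simp: vec_eq_iff forall_3)
  have d2: "d$2 = (l + a2) * d$3" using e(3) by (simp add: algebra_simps)
  have d1: "d$1 = (l * l + a2 * l + a1) * d$3" using e(2) d2 by (simp add: algebra_simps)
  have "d$3 * (l^3 + a2 * l^2 + a1 * l + a0) = 0"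
    using e(1) d1 by (simp add: algebra_simps power2_eq_square power3_eq_cube)
      (metis add.commute add_eq_0_iff)
  then have "d$3 = 0" using no_root by simp
  then show ?thesis using e by (simp add: vec_eq_iff forall_3)
qed

lemma \<phi>_independent:
  assumes "d \<noteq> 0" and "s *s d + t *s \<phi> d = 0"
  shows "s = 0 \<and> t = 0"
proof -
  have "t = 0"
  proof (rule ccontr)
    assume "t \<noteq> 0"
    then have "\<phi> d = (- s / t) *s d"
      using assms(2) by (simp add: vec_eq_iff field_simps) (metis add_eq_0_iff mult.commute)
    then show False using \<phi>_eigenvector_eq_0 assms(1) by blast
  qed
  then show ?thesis using assms by (simp add: vec_eq_iff) (metis vec_eq_iff zero_index)
qed

lemma cross_\<psi>_nonzero:
  assumes "d \<noteq> 0"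
  shows "cross d (\<psi> d) \<noteq> 0"
  using cross_eq_0_imp_multiple[OF assms] \<psi>_eigenvector_eq_0 assms by blast

definition dir_M :: "'a \<Rightarrow> 'a \<Rightarrow> 'a^3" where
  "dir_M z1 z2 = z1 *s axis 1 1 + z2 *s \<phi> (axis 1 1)"

lemma dir_M_nth [simp]: "dir_M z1 z2 $ 1 = z1" "dir_M z1 z2 $ 2 = 0" "dir_M z1 z2 $ 3 = - (a0 * z2)"
  by (simp_all add: dir_M_def axis_def)

definition line_L :: "'a^3 \<Rightarrow> ('a^5) set" where
  "line_L u = range (\<lambda>c::'a^2. vec5 (c$1) (c$1 *s u + c$2 *s \<phi> u) (c$2))"

definition line_M :: "'a \<Rightarrow> 'a \<Rightarrow> ('a^5) set" where
  "line_M z1 z2 = range (\<lambda>c::'a^2. vec5 (c$1 * z1) (c$2 *s dir_M z1 z2) (c$1 * z2))"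

definition plane_map :: "'a^3 \<Rightarrow> 'a^3 \<Rightarrow> 'a^5" where
  "plane_map v y = vec5 (dot v (\<phi> y) - dot v y) y (dot v (\<phi> y))"

definition plane_P :: "'a^3 \<Rightarrow> ('a^5) set" where
  "plane_P v = range (plane_map v)"

definition plane_inf :: "('a^5) set" where
  "plane_inf = range (\<lambda>y::'a^3. vec5 (y$1) (y$2 *s axis 2 1) (y$3))"

lemma mem_line_L: "vec5 a y b \<in> line_L u \<longleftrightarrow> y = a *s u + b *s \<phi> u"
  by (auto simp: line_L_def vec5_eq_iff intro!: image_eqI[of _ _ "vector [a, b]"])

lemma mem_line_M:
  "vec5 a y b \<in> line_M z1 z2 \<longleftrightarrow> (\<exists>s t. a = s * z1 \<and> b = s * z2 \<and> y = t *s dir_M z1 z2)"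
  by (auto simp: line_M_def vec5_eq_iff intro!: image_eqI[of _ _ "vector [s, t]" for s t])

lemma mem_plane_P: "vec5 a y b \<in> plane_P v \<longleftrightarrow> b = dot v (\<phi> y) \<and> a = b - dot v y"
  by (auto simp: plane_P_def plane_map_def vec5_eq_iff)

lemma mem_plane_inf: "vec5 a y b \<in> plane_inf \<longleftrightarrow> y$1 = 0 \<and> y$3 = 0"
proof
  assume "vec5 a y b \<in> plane_inf"
  then show "y$1 = 0 \<and> y$3 = 0" by (auto simp: plane_inf_def vec5_eq_iff axis_def)
next
  assume "y$1 = 0 \<and> y$3 = 0"
  then have "y = y$2 *s axis 2 1" by (simp add: vec_eq_iff forall_3 axis_def)
  then show "vec5 a y b \<in> plane_inf"
    unfolding plane_inf_def by (auto intro!: image_eqI[of _ _ "vector [a, y$2, b] :: 'a^3"])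
qed

lemma line_L_pg_line: "pg_line (line_L u)"
  unfolding line_L_def
proof (rule pg_subspace_range_linear)
  show "Vector_Spaces.linear (*s) (*s) (\<lambda>c::'a^2. vec5 (c$1) (c$1 *s u + c$2 *s \<phi> u) (c$2))"
    by (intro vec_linearI) (simp_all add: vec5_add vec5_scale algebra_simps)
qed (simp_all add: vec5_eq_0_iff, simp add: vec_eq_iff forall_2)

lemma line_M_pg_line:
  assumes "(z1, z2) \<noteq> (0, 0)"
  shows "pg_line (line_M z1 z2)"
  unfolding line_M_def
proof (rule pg_subspace_range_linear)
  show "Vector_Spaces.linear (*s) (*s) (\<lambda>c::'a^2. vec5 (c$1 * z1) (c$2 *s dir_M z1 z2) (c$1 * z2))"
    by (intro vec_linearI) (simp_all add: vec5_add vec5_scale algebra_simps)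
  have "dir_M z1 z2 \<noteq> 0" using assms a0_nonzero by (auto simp: vec_eq_iff forall_3)
  then show "c = 0" if "vec5 (c$1 * z1) (c$2 *s dir_M z1 z2) (c$1 * z2) = 0" for c :: "'a^2"
    using that assms by (auto simp: vec5_eq_0_iff vec.scale_eq_0_iff vec_eq_iff[of c] forall_2)
qed simp

lemma plane_map_add: "plane_map v (x + y) = plane_map v x + plane_map v y"
  by (simp add: plane_map_def vec5_add \<phi>_add dot_def algebra_simps)

lemma plane_map_scale: "plane_map v (c *s y) = c *s plane_map v y"
  by (simp add: plane_map_def vec5_scale \<phi>_scale dot_scale_right algebra_simps)

lemma plane_map_eq_0_iff: "plane_map v y = 0 \<longleftrightarrow> y = 0"
  by (auto simp: plane_map_def vec5_eq_0_iff \<phi>_def dot_def)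

lemma plane_P_pg_plane: "pg_plane (plane_P v)"
  unfolding plane_P_def
  by (rule pg_subspace_range_linear) (auto intro: vec_linearI plane_map_add plane_map_scale simp: plane_map_eq_0_iff)

lemma plane_inf_pg_plane: "pg_plane plane_inf"
  unfolding plane_inf_def
proof (rule pg_subspace_range_linear)
  show "Vector_Spaces.linear (*s) (*s) (\<lambda>y::'a^3. vec5 (y$1) (y$2 *s axis 2 1) (y$3))"
    by (intro vec_linearI) (simp_all add: vec5_add vec5_scale algebra_simps)
  show "y = 0" if "vec5 (y$1) (y$2 *s axis 2 1) (y$3) = 0" for y :: "'a^3"
    using that by (auto simp: vec5_eq_0_iff vec.scale_eq_0_iff axis_eq_0_iff vec_eq_iff[of y] forall_3)
qed simp

lemma line_L_skew:
  assumes "u \<noteq> u'"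
  shows "pg_skew (line_L u) (line_L u')"
proof (rule pg_skewI[OF line_L_pg_line line_L_pg_line])
  fix x assume "x \<in> line_L u" and "x \<in> line_L u'"
  moreover obtain a y b where x: "x = vec5 a y b" by (rule vec5_cases)
  ultimately have "y = a *s u + b *s \<phi> u" and "y = a *s u' + b *s \<phi> u'"
    by (simp_all add: mem_line_L)
  then have "a *s (u - u') + b *s \<phi> (u - u') = 0"
    by (simp add: \<phi>_diff vec_eq_iff algebra_simps)
  with assms have "a = 0 \<and> b = 0" by (meson \<phi>_independent eq_iff_diff_eq_0)
  then show "x = 0" using x \<open>y = a *s u + b *s \<phi> u\<close> by simp
qed

lemma line_L_line_M_skew:
  assumes "u \<notin> range (\<lambda>c. c *s axis 1 1)" and "(z1, z2) \<noteq> (0, 0)"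
  shows "pg_skew (line_L u) (line_M z1 z2)"
proof (rule pg_skewI[OF line_L_pg_line line_M_pg_line[OF assms(2)]])
  fix x assume L: "x \<in> line_L u" and M: "x \<in> line_M z1 z2"
  obtain a y b where x: "x = vec5 a y b" by (rule vec5_cases)
  have y: "y = a *s u + b *s \<phi> u" using L unfolding x mem_line_L .
  obtain s t where st: "a = s * z1" "b = s * z2" "y = t *s dir_M z1 z2"
    using M unfolding x mem_line_M by blast
  show "x = 0"
  proof (cases "s = 0")
    case True
    then show ?thesis using x y st by simp
  next
    case False
    define d where "d = s *s u - t *s axis 1 1"
    have "d \<noteq> 0"
    proof
      assume "d = 0"
      then have "u = (t / s) *s axis 1 1" using False by (simp add: d_def vec_eq_iff field_simps)
      then show False using assms(1) by blast
    qed
    moreover have "z1 *s d + z2 *s \<phi> d = (s * z1) *s u + (s * z2) *s \<phi> u - t *s dir_M z1 z2"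
      by (simp add: d_def \<phi>_diff \<phi>_scale dir_M_def vec_eq_iff algebra_simps)
    then have "z1 *s d + z2 *s \<phi> d = 0" using y st by simp
    ultimately have "z1 = 0 \<and> z2 = 0" by (rule \<phi>_independent)
    then show ?thesis using assms(2) by simp
  qed
qed

lemma line_M_skew:
  assumes "z1 * z2' \<noteq> z1' * z2"
  shows "pg_skew (line_M z1 z2) (line_M z1' z2')"
proof -
  have nonzero: "(z1, z2) \<noteq> (0, 0)" "(z1', z2') \<noteq> (0, 0)" using assms by auto
  show ?thesis
  proof (rule pg_skewI[OF line_M_pg_line[OF nonzero(1)] line_M_pg_line[OF nonzero(2)]])
    fix x assume M: "x \<in> line_M z1 z2" and M': "x \<in> line_M z1' z2'"
    obtain a y b where x: "x = vec5 a y b" by (rule vec5_cases)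
    obtain s t where st: "a = s * z1" "b = s * z2" "y = t *s dir_M z1 z2"
      using M unfolding x mem_line_M by blast
    obtain s' t' where st': "a = s' * z1'" "b = s' * z2'" "y = t' *s dir_M z1' z2'"
      using M' unfolding x mem_line_M by blast
    have "s * z1 = s' * z1'" "s * z2 = s' * z2'" using st st' by simp_all
    then have "s = 0" using assms by (rule proportional_pairs_eq_0)
    moreover have "t * z1 = t' * z1'" "t * (a0 * z2) = t' * (a0 * z2')"
      using st(3) st'(3) by (auto simp: vec_eq_iff forall_3)
    then have "t * z2 = t' * z2'" using a0_nonzero by simp
    with \<open>t * z1 = t' * z1'\<close> have "t = 0" using assms by (rule proportional_pairs_eq_0)
    ultimately show "x = 0" using x st by simp
  qed
qed

lemma plane_P_meet:
  assumes "v \<noteq> v'"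
  shows "pg_meet_in_one_point (plane_P v) (plane_P v')"
proof -
  define d where "d = v - v'"
  define y0 where "y0 = cross d (\<psi> d)"
  have "y0 \<noteq> 0" using assms by (simp add: y0_def d_def cross_\<psi>_nonzero)
  have shared: "plane_map v y \<in> plane_P v' \<longleftrightarrow> dot d y = 0 \<and> dot (\<psi> d) y = 0" for y
  proof -
    have "dot (\<psi> d) y = dot v (\<phi> y) - dot v' (\<phi> y)"
      by (simp add: d_def dot_diff_left flip: dot_\<phi>)
    moreover have "dot d y = dot v y - dot v' y" by (simp add: d_def dot_diff_left)
    ultimately show ?thesis by (auto simp: plane_map_def mem_plane_P)
  qed
  have "plane_P v \<inter> plane_P v' = vec.span {plane_map v y0}"
  proof (intro equalityI subsetI)
    fix x assume x: "x \<in> plane_P v \<inter> plane_P v'"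
    then obtain y where y: "x = plane_map v y" by (auto simp: plane_P_def)
    with x shared have "dot d y = 0" "dot (\<psi> d) y = 0" by auto
    then obtain t where "y = t *s y0"
      using orthogonal_imp_multiple_cross[of d "\<psi> d" y] \<open>y0 \<noteq> 0\<close> unfolding y0_def by blast
    then show "x \<in> vec.span {plane_map v y0}" using y by (auto simp: vec.span_singleton plane_map_scale)
  next
    fix x assume "x \<in> vec.span {plane_map v y0}"
    then obtain t where x: "x = plane_map v (t *s y0)" by (auto simp: vec.span_singleton plane_map_scale)
    have "dot d (t *s y0) = 0" "dot (\<psi> d) (t *s y0) = 0"
      by (simp_all add: y0_def dot_scale_right dot_cross_left dot_cross_right)
    then show "x \<in> plane_P v \<inter> plane_P v'" using shared x by (simp add: plane_P_def)
  qed
  moreover have "plane_map v y0 \<noteq> 0" using \<open>y0 \<noteq> 0\<close> by (simp add: plane_map_eq_0_iff)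
  ultimately show ?thesis by (rule pg_meet_in_one_pointI)
qed

lemma plane_P_plane_inf_meet: "pg_meet_in_one_point (plane_P v) plane_inf"
proof -
  have shared: "plane_map v y \<in> plane_inf \<longleftrightarrow> (\<exists>t. y = t *s axis 2 1)" for y
    by (auto simp: plane_map_def mem_plane_inf vec_eq_iff forall_3 axis_def)
  have "plane_P v \<inter> plane_inf = vec.span {plane_map v (axis 2 1)}"
  proof (intro equalityI subsetI)
    fix x assume x: "x \<in> plane_P v \<inter> plane_inf"
    then obtain y where y: "x = plane_map v y" by (auto simp: plane_P_def)
    with x shared obtain t where "y = t *s axis 2 1" by auto
    then show "x \<in> vec.span {plane_map v (axis 2 1)}"
      using y by (auto simp: vec.span_singleton plane_map_scale)
  next
    fix x assume "x \<in> vec.span {plane_map v (axis 2 1)}"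
    then obtain t where x: "x = plane_map v (t *s axis 2 1)"
      by (auto simp: vec.span_singleton plane_map_scale)
    then show "x \<in> plane_P v \<inter> plane_inf" using shared by (auto simp: plane_P_def)
  qed
  moreover have "plane_map v (axis 2 1) \<noteq> 0" by (simp add: plane_map_eq_0_iff axis_eq_0_iff)
  ultimately show ?thesis by (rule pg_meet_in_one_pointI)
qed

lemma line_L_not_subset_plane_P: "\<not> line_L u \<subseteq> plane_P v"
proof
  assume "line_L u \<subseteq> plane_P v"
  moreover have "vec5 1 u 0 \<in> line_L u" "vec5 0 (\<phi> u) 1 \<in> line_L u" by (simp_all add: mem_line_L)
  ultimately have "vec5 1 u 0 \<in> plane_P v" "vec5 0 (\<phi> u) 1 \<in> plane_P v" by auto
  then show False by (simp add: mem_plane_P)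
qed

lemma line_L_not_subset_plane_inf:
  assumes "u \<noteq> 0"
  shows "\<not> line_L u \<subseteq> plane_inf"
proof
  assume "line_L u \<subseteq> plane_inf"
  moreover have "vec5 1 u 0 \<in> line_L u" "vec5 0 (\<phi> u) 1 \<in> line_L u" by (simp_all add: mem_line_L)
  ultimately have "vec5 1 u 0 \<in> plane_inf" "vec5 0 (\<phi> u) 1 \<in> plane_inf" by auto
  then show False using assms by (simp add: mem_plane_inf vec_eq_iff forall_3)
qed

lemma line_M_not_subset_plane_P:
  assumes "(z1, z2) \<noteq> (0, 0)"
  shows "\<not> line_M z1 z2 \<subseteq> plane_P v"
proof
  assume "line_M z1 z2 \<subseteq> plane_P v"
  moreover have "vec5 z1 0 z2 \<in> line_M z1 z2"
    unfolding mem_line_M by (rule exI[of _ 1], rule exI[of _ 0]) simp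
  ultimately have "vec5 z1 0 z2 \<in> plane_P v" by auto
  then show False using assms by (simp add: mem_plane_P dot_def)
qed

lemma line_M_not_subset_plane_inf:
  assumes "(z1, z2) \<noteq> (0, 0)"
  shows "\<not> line_M z1 z2 \<subseteq> plane_inf"
proof
  assume "line_M z1 z2 \<subseteq> plane_inf"
  moreover have "vec5 0 (dir_M z1 z2) 0 \<in> line_M z1 z2"
    unfolding mem_line_M by (rule exI[of _ 0], rule exI[of _ 1]) simp
  ultimately have "vec5 0 (dir_M z1 z2) 0 \<in> plane_inf" by auto
  then show False using assms a0_nonzero by (simp add: mem_plane_inf)
qed

definition line :: "'a^3 + 'a option \<Rightarrow> ('a^5) set" where
  "line = case_sum line_L (\<lambda>k. case_prod line_M (proj_coords k))"

definition plane :: "('a^3) option \<Rightarrow> ('a^5) set" where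
  "plane = case_option plane_inf plane_P"

lemma line_Inl: "line (Inl u) = line_L u"
  by (simp add: line_def)

lemma line_Inr: "proj_coords k = (z1, z2) \<Longrightarrow> line (Inr k) = line_M z1 z2"
  by (simp add: line_def)

lemma line_pg_line: "pg_line (line i)"
proof (cases i)
  case (Inr k)
  obtain z1 z2 where z: "proj_coords k = (z1, z2)" by fastforce
  moreover have "(z1, z2) \<noteq> (0, 0)" using proj_coords_nonzero[of k] z by simp
  ultimately show ?thesis using Inr line_M_pg_line by (simp add: line_Inr)
qed (use line_L_pg_line in \<open>simp add: line_Inl\<close>)

lemma plane_pg_plane: "pg_plane (plane i)"
  using plane_inf_pg_plane plane_P_pg_plane by (cases i) (simp_all add: plane_def)

lemma line_skew:
  assumes "i \<in> line_index" and "j \<in> line_index" and "i \<noteq> j"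
  shows "pg_skew (line i) (line j)"
proof -
  have L_M: "pg_skew (line (Inl u)) (line (Inr k))" if "Inl u \<in> line_index" for u k
  proof -
    obtain z1 z2 where z: "proj_coords k = (z1, z2)" by fastforce
    have "u \<notin> range (\<lambda>c. c *s axis 1 1)" using that by (auto simp: line_index_def)
    moreover have "(z1, z2) \<noteq> (0, 0)" using proj_coords_nonzero[of k] z by simp
    ultimately show ?thesis using z by (simp add: line_Inl line_Inr line_L_line_M_skew)
  qed
  show ?thesis
  proof (cases i; cases j)
    fix u u' assume "i = Inl u" "j = Inl u'"
    then show ?thesis using assms(3) by (simp add: line_Inl line_L_skew)
  next
    fix u k assume "i = Inl u" "j = Inr k"
    then show ?thesis using assms(1) L_M by simp
  next
    fix k u assume "i = Inr k" "j = Inl u"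
    then show ?thesis using assms(2) L_M pg_skew_commute by metis
  next
    fix k k' assume ij: "i = Inr k" "j = Inr k'"
    obtain z1 z2 where z: "proj_coords k = (z1, z2)" by fastforce
    obtain z1' z2' where z': "proj_coords k' = (z1', z2')" by fastforce
    show ?thesis
      using ij assms(3) z z' by (simp add: line_Inr line_M_skew proj_coords_det_nonzero)
  qed
qed

lemma plane_meet:
  assumes "i \<noteq> j"
  shows "pg_meet_in_one_point (plane i) (plane j)"
proof (cases i; cases j)
  fix v assume "i = None" "j = Some v"
  then show ?thesis
    using plane_P_plane_inf_meet pg_meet_in_one_point_commute by (metis plane_def option.simps(4,5))
qed (use assms plane_P_meet plane_P_plane_inf_meet in \<open>simp_all add: plane_def\<close>)

lemma line_not_subset_plane:
  assumes "i \<in> line_index"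
  shows "\<not> line i \<subseteq> plane j"
proof (cases i)
  case (Inl u)
  then have "u \<noteq> 0" using assms by (force simp: line_index_def)
  then show ?thesis using Inl line_L_not_subset_plane_P line_L_not_subset_plane_inf
    by (cases j) (simp_all add: line_Inl plane_def)
next
  case (Inr k)
  obtain z1 z2 where z: "proj_coords k = (z1, z2)" by fastforce
  then have "(z1, z2) \<noteq> (0, 0)" using proj_coords_nonzero[of k] by simp
  then show ?thesis
    using Inr z line_M_not_subset_plane_P[of z1 z2] line_M_not_subset_plane_inf[of z1 z2]
    by (cases j) (simp_all add: line_Inr plane_def)
qed

end

theorem finite_field_skew_lines_and_planes:
  "\<exists>(\<L> :: ('a::{finite,field} ^ 5) set set) (\<P> :: ('a ^ 5) set set).
     card \<L> = CARD('a) ^ 3 + 1 \<and> card \<P> = CARD('a) ^ 3 + 1 \<and>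
     (\<forall>L\<in>\<L>. pg_line L) \<and> (\<forall>P\<in>\<P>. pg_plane P) \<and>
     (\<forall>L1\<in>\<L>. \<forall>L2\<in>\<L>. L1 \<noteq> L2 \<longrightarrow> pg_skew L1 L2) \<and>
     (\<forall>P1\<in>\<P>. \<forall>P2\<in>\<P>. P1 \<noteq> P2 \<longrightarrow> pg_meet_in_one_point P1 P2) \<and>
     (\<forall>L\<in>\<L>. \<forall>P\<in>\<P>. \<not> L \<subseteq> P)"
proof -
  obtain a0 a1 a2 :: 'a where "\<forall>t. t^3 + a2 * t^2 + a1 * t + a0 \<noteq> 0"
    using finite_field_rootless_cubic by blast
  then interpret rootless_cubic a0 a1 a2 by unfold_locales blast
  have "inj_on line line_index"
    by (rule inj_on_pg_subspace_family[OF line_pg_line]) (simp add: line_skew[unfolded pg_skew_def])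
  have "inj plane"
    by (rule inj_on_pg_subspace_family[OF plane_pg_plane])
      (simp add: plane_meet[unfolded pg_meet_in_one_point_def])
  show ?thesis
  proof (intro exI conjI)
    show "card (line ` line_index) = CARD('a)^3 + 1"
      using \<open>inj_on line line_index\<close> by (simp add: card_image card_line_index)
    show "card (range plane) = CARD('a)^3 + 1"
      using \<open>inj plane\<close> by (simp add: card_image card_UNIV_option)
    show "\<forall>L\<in>line ` line_index. pg_line L" using line_pg_line by blast
    show "\<forall>P\<in>range plane. pg_plane P" using plane_pg_plane by blast
    show "\<forall>L1\<in>line ` line_index. \<forall>L2\<in>line ` line_index. L1 \<noteq> L2 \<longrightarrow> pg_skew L1 L2"
      by (auto intro!: line_skew)
    show "\<forall>P1\<in>range plane. \<forall>P2\<in>range plane. P1 \<noteq> P2 \<longrightarrow> pg_meet_in_one_point P1 P2"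
      by (auto intro!: plane_meet)
    show "\<forall>L\<in>line ` line_index. \<forall>P\<in>range plane. \<not> L \<subseteq> P"
      by (auto dest: line_not_subset_plane)
  qed
qed

theorem theorem3p9:
  fixes q n :: nat
  assumes "q = 2 ^ n" and "n \<ge> 1"
    and "CARD('a::{finite,field}) = q"
  shows "\<exists>(\<L> :: ('a ^ 5) set set) (\<P> :: ('a ^ 5) set set).
           card \<L> = q ^ 3 + 1 \<and> card \<P> = q ^ 3 + 1 \<and>
           (\<forall>L\<in>\<L>. pg_line L) \<and> (\<forall>P\<in>\<P>. pg_plane P) \<and>
           (\<forall>L1\<in>\<L>. \<forall>L2\<in>\<L>. L1 \<noteq> L2 \<longrightarrow> pg_skew L1 L2) \<and>
           (\<forall>P1\<in>\<P>. \<forall>P2\<in>\<P>. P1 \<noteq> P2 \<longrightarrow> pg_meet_in_one_point P1 P2) \<and>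
           (\<forall>L\<in>\<L>. \<forall>P\<in>\<P>. \<not> L \<subseteq> P)"
  unfolding assms(3)[symmetric] by (rule finite_field_skew_lines_and_planes)

end
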